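(* Let $g:\mathbb{R}^d\to\mathbb{R}^M$ be an $L$-layer $\ell_\infty$-dist net (defined in the context) and $f(x)=\arg\max_{i\in[M]}g_i(x)$, where ties are resolved so that for an example $(x,y)$, $f(x')=y$ holds only if $g_y(x')>g_i(x')$ for all $i\neq y$. Let $\mathcal{D}$ be a distribution on $\mathbb{R}^d\times[M]$ with $\mathcal{R}_{\mathtt{nat}}(f,\mathcal{D})>0$, and let $\epsilon>0$, with the hypocritical risk taken with respect to the $\ell_\infty$-norm. Then $$\mathcal{R}_{\mathtt{hyp}}(f,\mathcal{D}_f^-)\le\mathbb{E}_{(x,y)\sim\mathcal{D}_f^-}\Bigl[\mathds{1}\bigl(\max_{i}g_i(x)-g_y(x)<2\epsilon\bigr)\Bigr].$$
   Context: $[M]=\{1,\dots,M\}$. An $L$-layer $\ell_\infty$-dist net is defined by widths $d_0=d,d_1,\dots,d_L=M$, weights $w^{(l,k)}\in\mathbb{R}^{d_{l-1}}$ and biases $b^{(l,k)}\in\mathbb{R}$ for $1\le l\le L$, $1\le k\le d_l$; with $x^{(0)}=x$, set $x^{(l)}_k=\|x^{(l-1)}-w^{(l,k)}\|_\infty+b^{(l,k)}$ and $x^{(l)}=(x^{(l)}_1,\dots,x^{(l)}_{d_l})$, and finally $g(x)=(-x^{(L)}_1,\dots,-x^{(L)}_M)$. Natural risk: $\mathcal{R}_{\mathtt{nat}}(f,\mathcal{P})=\mathbb{E}_{(x,y)\sim\mathcal{P}}[\mathds{1}(f(x)\neq y)]$. Hypocritical risk under the $\ell_\infty$ threat model: $\mathcal{R}_{\mathtt{hyp}}(f,\mathcal{P})=\mathbb{E}_{(x,y)\sim\mathcal{P}}\bigl[\sup_{\|x'-x\|_\infty\le\epsilon}\mathds{1}(f(x')=y)\bigr]$.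 $\mathcal{D}_f^-$ denotes the conditional distribution of $(x,y)\sim\mathcal{D}$ given the event $f(x)\neq y$ (misclassified examples). All indicator functions are assumed measurable. *)

theory Defs
  imports "HOL-Probability.Probability"
begin

(* Vectors of R^n are represented as nat => real, only coordinates 0..<n matter. *)
definition linf :: "nat \<Rightarrow> (nat \<Rightarrow> real) \<Rightarrow> real" where
  "linf n v = Max (insert 0 ((\<lambda>i. \<bar>v i\<bar>) ` {..<n}))"

(* x^(l) of an l_inf-dist net with widths ws = [d_0,...,d_L],
   weights W l k (layer l >= 1, neuron k < d_l, a vector in R^{d_(l-1)}), biases b l k *)
fun dist_layers :: "nat list \<Rightarrow> (nat \<Rightarrow> nat \<Rightarrow> nat \<Rightarrow> real) \<Rightarrow> (nat \<Rightarrow> nat \<Rightarrow> real)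
      \<Rightarrow> nat \<Rightarrow> (nat \<Rightarrow> real) \<Rightarrow> (nat \<Rightarrow> real)" where
  "dist_layers ws W b 0 x = x"
| "dist_layers ws W b (Suc l) x =
     (\<lambda>k. linf (ws ! l) (\<lambda>i. dist_layers ws W b l x i - W (Suc l) k i) + b (Suc l) k)"

(* g(x) = -x^(L), L = length ws - 1; labels/outputs indexed 0..<M *)
definition dist_net :: "nat list \<Rightarrow> (nat \<Rightarrow> nat \<Rightarrow> nat \<Rightarrow> real) \<Rightarrow> (nat \<Rightarrow> nat \<Rightarrow> real)
      \<Rightarrow> (nat \<Rightarrow> real) \<Rightarrow> nat \<Rightarrow> real" where
  "dist_net ws W b x i = - dist_layers ws W b (length ws - 1) x i"

definition nat_risk :: "((nat \<Rightarrow> real) \<Rightarrow> nat) \<Rightarrow> ((nat \<Rightarrow> real) \<times> nat) measure \<Rightarrow> real" where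
  "nat_risk f P = (\<integral>z. of_bool (f (fst z) \<noteq> snd z) \<partial>P)"

definition hyp_risk :: "nat \<Rightarrow> real \<Rightarrow> ((nat \<Rightarrow> real) \<Rightarrow> nat) \<Rightarrow> ((nat \<Rightarrow> real) \<times> nat) measure \<Rightarrow> real" where
  "hyp_risk d eps f P =
     (\<integral>z. of_bool (\<exists>x'. linf d (\<lambda>i. x' i - fst z i) \<le> eps \<and> f x' = snd z) \<partial>P)"

definition misclassified :: "((nat \<Rightarrow> real) \<Rightarrow> nat) \<Rightarrow> ((nat \<Rightarrow> real) \<times> nat) measure
      \<Rightarrow> ((nat \<Rightarrow> real) \<times> nat) set" where
  "misclassified f P = {z \<in> space P. f (fst z) \<noteq> snd z}"

definition cond_mis :: "((nat \<Rightarrow> real) \<Rightarrow> nat) \<Rightarrow> ((nat \<Rightarrow> real) \<times> nat) measure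
      \<Rightarrow> ((nat \<Rightarrow> real) \<times> nat) measure" where
  "cond_mis f P = uniform_measure P (misclassified f P)"

end

theory Submission
  imports Defs
begin

text \<open>Every layer of an \<open>\<ell>\<^sub>\<infinity>\<close>-dist net is 1-Lipschitz with respect to the
  \<open>\<ell>\<^sub>\<infinity>\<close>-norm, because \<open>v \<mapsto> \<parallel>v - w\<parallel>\<^sub>\<infinity> + b\<close> is, so the whole net is. Hence if some
  \<open>x'\<close> with \<open>\<parallel>x' - x\<parallel>\<^sub>\<infinity> \<le> \<epsilon>\<close> is classified as \<open>y\<close>, every output moves by at most
  \<open>\<epsilon>\<close> between \<open>x\<close> and \<open>x'\<close>, and since \<open>g\<^sub>y(x')\<close> beats every other output, the
  margin \<open>max\<^sub>i g\<^sub>i(x) - g\<^sub>y(x)\<close> is below \<open>2\<epsilon>\<close>. Integrating this pointwise bound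
  against \<open>\<D>\<^sub>f\<^sup>-\<close>, a probability measure since the natural risk is positive,
  gives the claim.\<close>

lemma linf_nonneg: "0 \<le> linf n v"
  unfolding linf_def by (rule Max_ge) auto

lemma abs_le_linf: "i < n \<Longrightarrow> \<bar>v i\<bar> \<le> linf n v"
  unfolding linf_def by (rule Max_ge) auto

lemma linf_le: "0 \<le> c \<Longrightarrow> (\<And>i. i < n \<Longrightarrow> \<bar>v i\<bar> \<le> c) \<Longrightarrow> linf n v \<le> c"
  unfolding linf_def by (subst Max_le_iff) auto

lemma linf_minus_commute: "linf n (\<lambda>i. u i - v i) = linf n (\<lambda>i. v i - u i)"
  unfolding linf_def by (simp add: abs_minus_commute)

lemma linf_triangle: "linf n u \<le> linf n v + linf n (\<lambda>i. u i - v i)"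
proof (rule linf_le)
  show "0 \<le> linf n v + linf n (\<lambda>i. u i - v i)"
    by (simp add: add_nonneg_nonneg linf_nonneg)
next
  fix i assume "i < n"
  then have "\<bar>v i\<bar> \<le> linf n v" "\<bar>u i - v i\<bar> \<le> linf n (\<lambda>i. u i - v i)"
    by (auto intro: abs_le_linf)
  then show "\<bar>u i\<bar> \<le> linf n v + linf n (\<lambda>i. u i - v i)" by linarith
qed

lemma abs_linf_diff_le: "\<bar>linf n u - linf n v\<bar> \<le> linf n (\<lambda>i. u i - v i)"
  using linf_triangle[of n u v] linf_triangle[of n v u] linf_minus_commute[of n u v] by linarith

text \<open>The \<open>\<ell>\<^sub>\<infinity>\<close>-distance of inputs only sees coordinates below \<open>d\<close>, hence the
  side condition at layer 0.\<close>

lemma dist_layers_lipschitz: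
  assumes "ws ! 0 = d" and "l < length ws" and "l = 0 \<Longrightarrow> k < d"
  shows "\<bar>dist_layers ws W b l x k - dist_layers ws W b l x' k\<bar> \<le> linf d (\<lambda>i. x i - x' i)"
  using assms(2,3)
proof (induction l arbitrary: k)
  case 0
  then show ?case using abs_le_linf[of k d "\<lambda>i. x i - x' i"] by simp
next
  case (Suc l)
  let ?u = "\<lambda>i. dist_layers ws W b l x i - W (Suc l) k i"
  let ?v = "\<lambda>i. dist_layers ws W b l x' i - W (Suc l) k i"
  have "linf (ws ! l) (\<lambda>i. ?u i - ?v i) \<le> linf d (\<lambda>i. x i - x' i)"
  proof (rule linf_le)
    fix i assume "i < ws ! l"
    with assms(1) have "l = 0 \<Longrightarrow> i < d" by simp
    with Suc.IH[of i] Suc.prems(1) show "\<bar>?u i - ?v i\<bar> \<le> linf d (\<lambda>i. x i - x' i)"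
      by simp
  qed (rule linf_nonneg)
  then show ?case
    using abs_linf_diff_le[of "ws ! l" ?u ?v] by simp
qed

lemma dist_net_lipschitz:
  assumes "ws ! 0 = d" and "length ws \<ge> 2"
  shows "\<bar>dist_net ws W b x k - dist_net ws W b x' k\<bar> \<le> linf d (\<lambda>i. x i - x' i)"
  using dist_layers_lipschitz[OF assms(1), of "length ws - 1" k W b x x'] assms(2)
  unfolding dist_net_def by (simp add: abs_minus_commute)

lemma Max_margin_lt_if_near_strict_winner:
  fixes g g' :: "nat \<Rightarrow> real"
  assumes "y < M" and "0 < eps"
    and near: "\<And>k. \<bar>g' k - g k\<bar> \<le> eps"
    and winner: "\<And>i. i < M \<Longrightarrow> i \<noteq> y \<Longrightarrow> g' i < g' y"
  shows "Max (g ` {..<M}) - g y < 2 * eps"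
proof -
  obtain j where "j < M" and j_max: "Max (g ` {..<M}) = g j"
    using Max_in[of "g ` {..<M}"] \<open>y < M\<close> by fastforce
  show ?thesis
  proof (cases "j = y")
    case False
    with \<open>j < M\<close> have "g' j < g' y" by (rule winner)
    with near[of j] near[of y] j_max show ?thesis by linarith
  qed (use j_max \<open>0 < eps\<close> in simp)
qed

lemma nat_risk_eq_measure_misclassified:
  assumes "misclassified f D \<in> sets D" and "finite_measure D"
  shows "nat_risk f D = measure D (misclassified f D)"
proof -
  have "nat_risk f D = (\<integral>z. indicator (misclassified f D) z \<partial>D)"
    unfolding nat_risk_def
    by (rule Bochner_Integration.integral_cong) (auto simp: misclassified_def indicator_def)
  also have "\<dots> = measure D (misclassified f D)"
    using assms by simp
  finally show ?thesis .
qed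

lemma prob_space_cond_mis:
  assumes "prob_space D" and "misclassified f D \<in> sets D" and "nat_risk f D > 0"
  shows "prob_space (cond_mis f D)"
proof -
  interpret prob_space D by fact
  have "emeasure D (misclassified f D) \<noteq> 0"
    using assms(3) nat_risk_eq_measure_misclassified[OF assms(2)] emeasure_eq_measure
    by (simp add: finite_measure_axioms)
  then show ?thesis
    unfolding cond_mis_def by (simp add: prob_space_uniform_measure)
qed

lemma borel_measurable_cond_mis: "borel_measurable (cond_mis f D) = borel_measurable D"
  unfolding cond_mis_def by (rule measurable_cong_sets) auto

lemma (in finite_measure) integral_of_bool_mono:
  assumes "(\<lambda>z. of_bool (P z) :: real) \<in> borel_measurable M"
    and "(\<lambda>z. of_bool (Q z) :: real) \<in> borel_measurable M"
    and "\<And>z. z \<in> space M \<Longrightarrow> P z \<Longrightarrow> Q z"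
  shows "(\<integral>z. of_bool (P z) \<partial>M) \<le> (\<integral>z. of_bool (Q z) \<partial>M :: real)"
proof (rule integral_mono)
  show "integrable M (\<lambda>z. of_bool (P z) :: real)" "integrable M (\<lambda>z. of_bool (Q z) :: real)"
    using assms(1,2) by (auto intro: integrable_const_bound[where B=1])
qed (use assms(3) in auto)

theorem corollary1:
  fixes ws :: "nat list" and W :: "nat \<Rightarrow> nat \<Rightarrow> nat \<Rightarrow> real" and b :: "nat \<Rightarrow> nat \<Rightarrow> real"
    and d M :: nat and f :: "(nat \<Rightarrow> real) \<Rightarrow> nat"
    and D :: "((nat \<Rightarrow> real) \<times> nat) measure" and eps :: real
  assumes "length ws \<ge> 2" and "ws ! 0 = d" and "last ws = M"
    and "\<forall>l < length ws. 0 < ws ! l"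
    and f_argmax: "\<forall>x y. y < M \<longrightarrow> (\<forall>i<M. i \<noteq> y \<longrightarrow> dist_net ws W b x i < dist_net ws W b x y)
                     \<longrightarrow> f x = y"
    and f_tie: "\<forall>x y. y < M \<longrightarrow> f x = y
                     \<longrightarrow> (\<forall>i<M. i \<noteq> y \<longrightarrow> dist_net ws W b x i < dist_net ws W b x y)"
    and "prob_space D" and "space D \<subseteq> UNIV \<times> {..<M}"
    and "misclassified f D \<in> sets D"
    and "(\<lambda>z. of_bool (\<exists>x'. linf d (\<lambda>i. x' i - fst z i) \<le> eps \<and> f x' = snd z) :: real)
           \<in> borel_measurable D"
    and "(\<lambda>z. of_bool (Max ((\<lambda>i. dist_net ws W b (fst z) i) ` {..<M})
                        - dist_net ws W b (fst z) (snd z) < 2 * eps) :: real) \<in> borel_measurable D"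
    and "eps > 0" and "nat_risk f D > 0"
  shows "hyp_risk d eps f (cond_mis f D)
     \<le> (\<integral>z. of_bool (Max ((\<lambda>i. dist_net ws W b (fst z) i) ` {..<M})
                        - dist_net ws W b (fst z) (snd z) < 2 * eps) \<partial>(cond_mis f D))"
proof -
  interpret prob_space "cond_mis f D"
    using assms(7,9,13) by (rule prob_space_cond_mis)
  have margin: "Max ((\<lambda>i. dist_net ws W b x i) ` {..<M}) - dist_net ws W b x y < 2 * eps"
    if "(x, y) \<in> space D" and "linf d (\<lambda>i. x' i - x i) \<le> eps" and "f x' = y" for x y x'
  proof (rule Max_margin_lt_if_near_strict_winner)
    show "y < M" using that(1) assms(8) by auto
    then show "\<And>i. i < M \<Longrightarrow> i \<noteq> y \<Longrightarrow> dist_net ws W b x' i < dist_net ws W b x' y"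
      using f_tie that(3) by blast
    show "\<bar>dist_net ws W b x' k - dist_net ws W b x k\<bar> \<le> eps" for k
      using dist_net_lipschitz[OF assms(2,1), of W b x' k x] that(2) by simp
  qed (fact \<open>eps > 0\<close>)
  show ?thesis
    unfolding hyp_risk_def
    using assms(10,11) margin
    by (intro integral_of_bool_mono) (auto simp: borel_measurable_cond_mis cond_mis_def)
qed

end
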